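(* Let $G$ be a linear reductive algebraic group over $\mathbb{C}$ with maximal torus $T\subseteq B$, root system $\Phi$ with positive roots $\Phi^+$ and simple roots $\Delta$, and Weyl group $W$. Let $S\in\mathfrak{h}=\mathrm{Lie}(T)$ be a non-regular semisimple element such that $M=Z_G(S)$ is a standard Levi subgroup. Let $v\in{}^MW$, let $L=L_v$ and write $v=x_vw_v$ with $w_v$ the longest element of $W_L$ and $x_v\in W^L$. Then $\tau=x_vz$ is an element of ${}^MW$ for every $z\in W_L$.
   Context: For $w\in W$, $N(w)=\{\gamma\in\Phi^+ : w(\gamma)\in-\Phi^+\}$ and $\ell(w)$ is the length. For a subset $\Delta_L\subseteq\Delta$, $L$ denotes the standard Levi subgroup, $\Phi_L$ its root subsystem with $\Phi_L^+=\Phi_L\cap\Phi^+$, $W_L=\langle s_\alpha:\alpha\in\Delta_L\rangle$, ${}^LW=\{v\in W: N(v^{-1})\subseteq\Phi^+\setminus\Phi_L^+\}$, $W^L=\{v\in W: N(v)\subseteq\Phi^+\setminus\Phi_L^+\}$. The Levi $M=Z_G(S)$ has $\Phi_M=\{\gamma:\gamma(S)=0\}$ and $\Delta_M=\{\alpha\in\Delta:\alpha(S)=0\}$. For $v\in W$, $R(v)=N(v)\cap\Delta$ and $L_v$ is the standard Levi subgroup with $\Delta_{L_v}=R(v)$; $v$ factors uniquely as $v=x_vw_v$ with $x_v\in W^{L_v}$, $w_v$ the longest element of $W_{L_v}$, $\ell(v)=\ell(x_v)+\ell(w_v)$. *)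

theory Defs
  imports "HOL-Analysis.Analysis"
begin

text \<open>Abstract (reduced, crystallographic) root system \<Phi> in a real Euclidean space,
  with simple system \<Delta>; the Weyl group acts by orthogonal reflections.\<close>

definition refl :: "'a::real_inner \<Rightarrow> 'a \<Rightarrow> 'a" where
  "refl \<alpha> = (\<lambda>x. x - (2 * (x \<bullet> \<alpha>) / (\<alpha> \<bullet> \<alpha>)) *\<^sub>R \<alpha>)"

definition wprod :: "'a::real_inner list \<Rightarrow> 'a \<Rightarrow> 'a" where
  "wprod \<alpha>s = foldr (\<lambda>\<alpha> g. refl \<alpha> \<circ> g) \<alpha>s id"

definition weyl_gen :: "'a::real_inner set \<Rightarrow> ('a \<Rightarrow> 'a) set" where
  "weyl_gen A = {wprod \<alpha>s | \<alpha>s. set \<alpha>s \<subseteq> A}"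

definition root_system :: "'a::euclidean_space set \<Rightarrow> bool" where
  "root_system \<Phi> \<longleftrightarrow> finite \<Phi> \<and> 0 \<notin> \<Phi> \<and>
     (\<forall>\<alpha>\<in>\<Phi>. refl \<alpha> ` \<Phi> = \<Phi>) \<and>
     (\<forall>\<alpha>\<in>\<Phi>. \<forall>\<beta>\<in>\<Phi>. 2 * (\<beta> \<bullet> \<alpha>) / (\<alpha> \<bullet> \<alpha>) \<in> \<int>) \<and>
     (\<forall>\<alpha>\<in>\<Phi>. \<forall>c. c *\<^sub>R \<alpha> \<in> \<Phi> \<longrightarrow> c = 1 \<or> c = -1)"

definition pos_roots :: "'a::euclidean_space set \<Rightarrow> 'a set \<Rightarrow> 'a set" where
  "pos_roots \<Phi> \<Delta> = {\<gamma>\<in>\<Phi>. \<exists>c. (\<forall>\<alpha>\<in>\<Delta>. c \<alpha> \<in> \<int> \<and> c \<alpha> \<ge> 0) \<and> \<gamma> = (\<Sum>\<alpha>\<in>\<Delta>. c \<alpha> *\<^sub>R \<alpha>)}"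

definition simple_system :: "'a::euclidean_space set \<Rightarrow> 'a set \<Rightarrow> bool" where
  "simple_system \<Phi> \<Delta> \<longleftrightarrow> \<Delta> \<subseteq> \<Phi> \<and> independent \<Delta> \<and>
     (\<forall>\<gamma>\<in>\<Phi>. \<gamma> \<in> pos_roots \<Phi> \<Delta> \<or> - \<gamma> \<in> pos_roots \<Phi> \<Delta>)"

abbreviation weyl :: "'a::euclidean_space set \<Rightarrow> ('a \<Rightarrow> 'a) set" where
  "weyl \<Phi> \<equiv> weyl_gen \<Phi>"

definition inversions :: "'a::euclidean_space set \<Rightarrow> 'a set \<Rightarrow> ('a \<Rightarrow> 'a) \<Rightarrow> 'a set" where
  "inversions \<Phi> \<Delta> w = {\<gamma>\<in>pos_roots \<Phi> \<Delta>. w \<gamma> \<in> uminus ` pos_roots \<Phi> \<Delta>}"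

definition wlength :: "'a::euclidean_space set \<Rightarrow> ('a \<Rightarrow> 'a) \<Rightarrow> nat" where
  "wlength \<Delta> w = (LEAST n. \<exists>\<alpha>s. set \<alpha>s \<subseteq> \<Delta> \<and> length \<alpha>s = n \<and> wprod \<alpha>s = w)"

definition levi_roots :: "'a::euclidean_space set \<Rightarrow> 'a set \<Rightarrow> 'a set" where
  "levi_roots \<Phi> D = \<Phi> \<inter> span D"

definition levi_pos :: "'a::euclidean_space set \<Rightarrow> 'a set \<Rightarrow> 'a set \<Rightarrow> 'a set" where
  "levi_pos \<Phi> \<Delta> D = levi_roots \<Phi> D \<inter> pos_roots \<Phi> \<Delta>"

text \<open>^L W and W^L.\<close>
definition left_min :: "'a::euclidean_space set \<Rightarrow> 'a set \<Rightarrow> 'a set \<Rightarrow> ('a \<Rightarrow> 'a) set" where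
  "left_min \<Phi> \<Delta> D = {v \<in> weyl \<Phi>. inversions \<Phi> \<Delta> (inv v) \<subseteq> pos_roots \<Phi> \<Delta> - levi_pos \<Phi> \<Delta> D}"

definition right_min :: "'a::euclidean_space set \<Rightarrow> 'a set \<Rightarrow> 'a set \<Rightarrow> ('a \<Rightarrow> 'a) set" where
  "right_min \<Phi> \<Delta> D = {v \<in> weyl \<Phi>. inversions \<Phi> \<Delta> v \<subseteq> pos_roots \<Phi> \<Delta> - levi_pos \<Phi> \<Delta> D}"

definition Rset :: "'a::euclidean_space set \<Rightarrow> 'a set \<Rightarrow> ('a \<Rightarrow> 'a) \<Rightarrow> 'a set" where
  "Rset \<Phi> \<Delta> v = inversions \<Phi> \<Delta> v \<inter> \<Delta>"

definition longest :: "'a::euclidean_space set \<Rightarrow> 'a set \<Rightarrow> ('a \<Rightarrow> 'a) \<Rightarrow> bool" where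
  "longest \<Delta> D w \<longleftrightarrow> w \<in> weyl_gen D \<and> (\<forall>u\<in>weyl_gen D. wlength \<Delta> u \<le> wlength \<Delta> w)"

end

theory Submission
  imports Defs
begin

text \<open>Let \<open>D = R(v)\<close> be the simple roots of \<open>L\<close>. Since \<open>x \<in> W\<^sup>L\<close> inverts no root of
  \<open>\<Phi>\<^sub>L\<^sup>+\<close> while \<open>v = x w\<close> makes every \<open>d \<in> D\<close> negative, \<open>w\<close> makes every \<open>d \<in> D\<close> negative;
  hence \<open>w\<close> and \<open>w\<^sup>-\<^sup>1\<close> send all of \<open>\<Phi>\<^sub>L\<^sup>+\<close> to negative roots. As elements of \<open>W\<^sub>L\<close> do not
  change the sign of roots outside \<open>span D\<close>, this yields \<open>N((x z)\<^sup>-\<^sup>1) \<subseteq> N(v\<^sup>-\<^sup>1)\<close>, which avoids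
  \<open>\<Phi>\<^sub>M\<^sup>+\<close> because \<open>v \<in> \<^sup>MW\<close>.\<close>

lemma refl_linear: "linear (refl \<alpha>)"
  unfolding refl_def
  by (auto intro!: linearI simp: algebra_simps inner_add_left add_divide_distrib scaleR_add_left)

lemma refl_refl: "\<alpha> \<noteq> 0 \<Longrightarrow> refl \<alpha> (refl \<alpha> y) = y"
  unfolding refl_def by (simp add: inner_diff_left algebra_simps)

lemma refl_self: "\<alpha> \<noteq> 0 \<Longrightarrow> refl \<alpha> \<alpha> = - \<alpha>"
  unfolding refl_def by (simp add: scaleR_2)

lemma refl_diff_in_span: "\<alpha> \<in> A \<Longrightarrow> refl \<alpha> y - y \<in> span A"
  unfolding refl_def by (simp add: span_base span_neg span_scale)

lemma wprod_Nil [simp]: "wprod [] = id"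
  by (simp add: wprod_def)

lemma wprod_Cons [simp]: "wprod (\<alpha> # \<alpha>s) = refl \<alpha> \<circ> wprod \<alpha>s"
  by (simp add: wprod_def)

lemma wprod_append: "wprod (\<alpha>s @ \<beta>s) = wprod \<alpha>s \<circ> wprod \<beta>s"
  by (induction \<alpha>s) auto

lemma wprod_linear: "linear (wprod \<alpha>s)"
proof (induction \<alpha>s)
  case Nil
  show ?case by (simp add: linear_ident)
next
  case (Cons \<alpha> \<alpha>s)
  then show ?case
    unfolding wprod_Cons by (rule linear_compose[OF _ refl_linear])
qed

lemma wprod_rev_inverse:
  assumes "0 \<notin> set \<alpha>s"
  shows "wprod (rev \<alpha>s) \<circ> wprod \<alpha>s = id" and "wprod \<alpha>s \<circ> wprod (rev \<alpha>s) = id"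
  using assms
proof (induction \<alpha>s)
  case (Cons \<alpha> \<alpha>s)
  { case 1 then show ?case using Cons by (auto simp: wprod_append fun_eq_iff refl_refl) }
  { case 2 then show ?case using Cons by (simp add: wprod_append fun_eq_iff refl_refl) }
qed auto

lemma weyl_genE:
  assumes "u \<in> weyl_gen A"
  obtains \<alpha>s where "set \<alpha>s \<subseteq> A" and "u = wprod \<alpha>s"
  using assms by (auto simp: weyl_gen_def)

lemma weyl_gen_mono: "A \<subseteq> B \<Longrightarrow> weyl_gen A \<subseteq> weyl_gen B"
  by (auto simp: weyl_gen_def)

lemma weyl_gen_comp: "u \<in> weyl_gen A \<Longrightarrow> u' \<in> weyl_gen A \<Longrightarrow> u \<circ> u' \<in> weyl_gen A"
proof (elim weyl_genE)
  fix \<alpha>s \<beta>s assume "set \<alpha>s \<subseteq> A" "u = wprod \<alpha>s" "set \<beta>s \<subseteq> A" "u' = wprod \<beta>s"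
  then show "u \<circ> u' \<in> weyl_gen A"
    unfolding weyl_gen_def by (auto intro!: exI[of _ "\<alpha>s @ \<beta>s"] simp: wprod_append)
qed

lemma weyl_gen_linear: "u \<in> weyl_gen A \<Longrightarrow> linear u"
  by (auto elim: weyl_genE simp: wprod_linear)

lemma weyl_gen_bij_inv:
  assumes "0 \<notin> A" and "u \<in> weyl_gen A"
  shows "bij u" and "inv u \<in> weyl_gen A"
proof -
  obtain \<alpha>s where \<alpha>s: "set \<alpha>s \<subseteq> A" "u = wprod \<alpha>s"
    using assms(2) by (rule weyl_genE)
  then have "0 \<notin> set \<alpha>s" using assms(1) by blast
  then have "inv u = wprod (rev \<alpha>s)" and "bij u"
    using wprod_rev_inverse \<alpha>s(2) by (auto intro: inv_unique_comp o_bij)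
  then show "bij u" and "inv u \<in> weyl_gen A"
    using \<alpha>s(1) by (auto simp: weyl_gen_def intro!: exI[of _ "rev \<alpha>s"])
qed

lemma weyl_gen_diff_in_span: "u \<in> weyl_gen A \<Longrightarrow> u y - y \<in> span A"
proof (elim weyl_genE)
  fix \<alpha>s assume "set \<alpha>s \<subseteq> A" and "u = wprod \<alpha>s"
  then show "u y - y \<in> span A"
  proof (induction \<alpha>s arbitrary: u)
    case (Cons \<alpha> \<alpha>s)
    have "refl \<alpha> (wprod \<alpha>s y) - y = (refl \<alpha> (wprod \<alpha>s y) - wprod \<alpha>s y) + (wprod \<alpha>s y - y)"
      by simp
    also have "\<dots> \<in> span A"
      using Cons by (intro span_add refl_diff_in_span) auto
    finally show ?case using Cons.prems by simp
  qed (simp add: span_zero)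
qed

lemma weyl_gen_span: "u \<in> weyl_gen A \<Longrightarrow> y \<in> span A \<Longrightarrow> u y \<in> span A"
  using span_add[OF weyl_gen_diff_in_span] by (metis diff_add_cancel)

lemma weyl_gen_invariant:
  assumes "u \<in> weyl_gen A" and "\<And>\<alpha>. \<alpha> \<in> A \<Longrightarrow> refl \<alpha> ` X = X" and "y \<in> X"
  shows "u y \<in> X"
proof -
  obtain \<alpha>s where "set \<alpha>s \<subseteq> A" and "u = wprod \<alpha>s"
    using assms(1) by (rule weyl_genE)
  then show ?thesis
    using assms(2,3) by (induction \<alpha>s arbitrary: u) auto
qed

lemma inversions_iff:
  "\<gamma> \<in> inversions \<Phi> \<Delta> u \<longleftrightarrow> \<gamma> \<in> pos_roots \<Phi> \<Delta> \<and> - u \<gamma> \<in> pos_roots \<Phi> \<Delta>"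
  by (force simp: inversions_def)

text \<open>The \<open>\<beta>\<close>-coordinate with respect to \<open>\<Delta>\<close>, extended to a linear functional on the
  whole space; unspecified unless \<open>\<Delta>\<close> is independent.\<close>
definition simple_coeff :: "'a::euclidean_space set \<Rightarrow> 'a \<Rightarrow> 'a \<Rightarrow> real" where
  "simple_coeff \<Delta> \<beta> = (SOME f. linear f \<and> (\<forall>\<alpha>\<in>\<Delta>. f \<alpha> = (if \<alpha> = \<beta> then 1 else 0)))"

locale simple_root_system =
  fixes \<Phi> \<Delta> :: "'a::euclidean_space set"
  assumes root_system: "root_system \<Phi>" and simple_system: "simple_system \<Phi> \<Delta>"
begin

lemma zero_notin_roots: "0 \<notin> \<Phi>"
  and refl_image_roots: "\<alpha> \<in> \<Phi> \<Longrightarrow> refl \<alpha> ` \<Phi> = \<Phi>"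
  using root_system unfolding root_system_def by blast+

lemma simple_subset_roots: "\<Delta> \<subseteq> \<Phi>"
  and independent_simple: "independent \<Delta>"
  and root_pos_or_neg: "\<gamma> \<in> \<Phi> \<Longrightarrow> \<gamma> \<in> pos_roots \<Phi> \<Delta> \<or> - \<gamma> \<in> pos_roots \<Phi> \<Delta>"
  using simple_system by (auto simp: simple_system_def)

lemma finite_simple: "finite \<Delta>"
  using root_system simple_subset_roots finite_subset by (auto simp: root_system_def)

lemma pos_roots_subset: "pos_roots \<Phi> \<Delta> \<subseteq> \<Phi>"
  by (auto simp: pos_roots_def)

lemma uminus_root: "\<gamma> \<in> \<Phi> \<Longrightarrow> - \<gamma> \<in> \<Phi>"
  using refl_image_roots zero_notin_roots refl_self by (metis image_eqI)

lemma weyl_gen_root: "A \<subseteq> \<Phi> \<Longrightarrow> u \<in> weyl_gen A \<Longrightarrow> \<gamma> \<in> \<Phi> \<Longrightarrow> u \<gamma> \<in> \<Phi>"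
  using weyl_gen_invariant refl_image_roots by blast

lemma simple_coeff_linear: "linear (simple_coeff \<Delta> \<beta>)"
  and simple_coeff_simple: "\<alpha> \<in> \<Delta> \<Longrightarrow> simple_coeff \<Delta> \<beta> \<alpha> = (if \<alpha> = \<beta> then 1 else 0)"
proof -
  have "\<exists>f::'a \<Rightarrow> real. linear f \<and> (\<forall>\<alpha>\<in>\<Delta>. f \<alpha> = (if \<alpha> = \<beta> then 1 else 0))"
    using linear_independent_extend[OF independent_simple, of "\<lambda>\<alpha>. if \<alpha> = \<beta> then 1 else 0"]
    by simp
  then have "linear (simple_coeff \<Delta> \<beta>) \<and>
      (\<forall>\<alpha>\<in>\<Delta>. simple_coeff \<Delta> \<beta> \<alpha> = (if \<alpha> = \<beta> then 1 else 0))"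
    unfolding simple_coeff_def by (rule someI_ex)
  then show "linear (simple_coeff \<Delta> \<beta>)"
    and "\<alpha> \<in> \<Delta> \<Longrightarrow> simple_coeff \<Delta> \<beta> \<alpha> = (if \<alpha> = \<beta> then 1 else 0)"
    by auto
qed

lemma simple_coeff_uminus: "simple_coeff \<Delta> \<beta> (- y) = - simple_coeff \<Delta> \<beta> y"
  using simple_coeff_linear linear_neg by blast

lemma simple_coeff_sum:
  "simple_coeff \<Delta> \<beta> (\<Sum>\<alpha>\<in>\<Delta>. c \<alpha> *\<^sub>R \<alpha>) = (\<Sum>\<alpha>\<in>\<Delta>. c \<alpha> * simple_coeff \<Delta> \<beta> \<alpha>)"
  using simple_coeff_linear by (simp add: linear_sum linear_scale)

lemma simple_coeff_sum_simple: "\<beta> \<in> \<Delta> \<Longrightarrow> simple_coeff \<Delta> \<beta> (\<Sum>\<alpha>\<in>\<Delta>. c \<alpha> *\<^sub>R \<alpha>) = c \<beta>"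
  using finite_simple by (simp add: simple_coeff_sum simple_coeff_simple if_distrib cong: if_cong)

lemma simple_coeff_span_eq_0: "\<beta> \<in> \<Delta> - D \<Longrightarrow> D \<subseteq> \<Delta> \<Longrightarrow> y \<in> span D \<Longrightarrow> simple_coeff \<Delta> \<beta> y = 0"
  using linear_eq_0_on_span[OF simple_coeff_linear] simple_coeff_simple by (metis Diff_iff subsetD)

lemma pos_root_coeffs:
  assumes "\<gamma> \<in> pos_roots \<Phi> \<Delta>"
  shows "\<forall>\<beta>\<in>\<Delta>. 0 \<le> simple_coeff \<Delta> \<beta> \<gamma>" and "\<gamma> = (\<Sum>\<alpha>\<in>\<Delta>. simple_coeff \<Delta> \<alpha> \<gamma> *\<^sub>R \<alpha>)"
proof -
  obtain c where c: "\<forall>\<alpha>\<in>\<Delta>. c \<alpha> \<in> \<int> \<and> 0 \<le> c \<alpha>" "\<gamma> = (\<Sum>\<alpha>\<in>\<Delta>. c \<alpha> *\<^sub>R \<alpha>)"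
    using assms by (auto simp: pos_roots_def)
  then have coeff: "\<And>\<beta>. \<beta> \<in> \<Delta> \<Longrightarrow> simple_coeff \<Delta> \<beta> \<gamma> = c \<beta>"
    using simple_coeff_sum_simple by blast
  show "\<forall>\<beta>\<in>\<Delta>. 0 \<le> simple_coeff \<Delta> \<beta> \<gamma>"
    using c(1) coeff by simp
  show "\<gamma> = (\<Sum>\<alpha>\<in>\<Delta>. simple_coeff \<Delta> \<alpha> \<gamma> *\<^sub>R \<alpha>)"
    using c(2) coeff by simp
qed

lemma root_eq_sum_simple_coeff:
  assumes "\<gamma> \<in> \<Phi>"
  shows "\<gamma> = (\<Sum>\<alpha>\<in>\<Delta>. simple_coeff \<Delta> \<alpha> \<gamma> *\<^sub>R \<alpha>)"
proof (cases "\<gamma> \<in> pos_roots \<Phi> \<Delta>")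
  case True
  then show ?thesis by (rule pos_root_coeffs(2))
next
  case False
  then have "- \<gamma> \<in> pos_roots \<Phi> \<Delta>"
    using root_pos_or_neg assms by blast
  then have "- \<gamma> = (\<Sum>\<alpha>\<in>\<Delta>. simple_coeff \<Delta> \<alpha> (- \<gamma>) *\<^sub>R \<alpha>)"
    by (rule pos_root_coeffs(2))
  also have "\<dots> = - (\<Sum>\<alpha>\<in>\<Delta>. simple_coeff \<Delta> \<alpha> \<gamma> *\<^sub>R \<alpha>)"
    by (simp add: simple_coeff_uminus sum_negf)
  finally show ?thesis by simp
qed

lemma root_has_nonzero_coeff:
  assumes "\<gamma> \<in> \<Phi>"
  obtains \<beta> where "\<beta> \<in> \<Delta>" and "simple_coeff \<Delta> \<beta> \<gamma> \<noteq> 0"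
proof (rule ccontr)
  assume "\<not> thesis"
  then have "\<forall>\<beta>\<in>\<Delta>. simple_coeff \<Delta> \<beta> \<gamma> = 0"
    using that by blast
  then have "(\<Sum>\<alpha>\<in>\<Delta>. simple_coeff \<Delta> \<alpha> \<gamma> *\<^sub>R \<alpha>) = 0"
    by simp
  then have "\<gamma> = 0"
    using root_eq_sum_simple_coeff[OF assms] by argo
  then show False
    using assms zero_notin_roots by simp
qed

lemma pos_root_iff_coeff_pos:
  assumes "\<gamma> \<in> \<Phi>" and "\<beta> \<in> \<Delta>" and "simple_coeff \<Delta> \<beta> \<gamma> \<noteq> 0"
  shows "\<gamma> \<in> pos_roots \<Phi> \<Delta> \<longleftrightarrow> 0 < simple_coeff \<Delta> \<beta> \<gamma>"
proof
  assume "\<gamma> \<in> pos_roots \<Phi> \<Delta>"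
  then show "0 < simple_coeff \<Delta> \<beta> \<gamma>"
    using pos_root_coeffs(1) assms(2,3) by force
next
  assume pos: "0 < simple_coeff \<Delta> \<beta> \<gamma>"
  show "\<gamma> \<in> pos_roots \<Phi> \<Delta>"
  proof (rule ccontr)
    assume "\<gamma> \<notin> pos_roots \<Phi> \<Delta>"
    then have "- \<gamma> \<in> pos_roots \<Phi> \<Delta>"
      using root_pos_or_neg assms(1) by blast
    then have "0 \<le> simple_coeff \<Delta> \<beta> (- \<gamma>)"
      using pos_root_coeffs(1) assms(2) by blast
    then show False
      using pos by (simp add: simple_coeff_uminus)
  qed
qed

lemma pos_root_not_neg:
  assumes "\<gamma> \<in> pos_roots \<Phi> \<Delta>"
  shows "- \<gamma> \<notin> pos_roots \<Phi> \<Delta>"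
proof
  assume neg: "- \<gamma> \<in> pos_roots \<Phi> \<Delta>"
  have "\<gamma> \<in> \<Phi>"
    using assms pos_roots_subset by blast
  then obtain \<beta> where "\<beta> \<in> \<Delta>" and "simple_coeff \<Delta> \<beta> \<gamma> \<noteq> 0"
    by (rule root_has_nonzero_coeff)
  then show False
    using pos_root_coeffs(1)[OF assms] pos_root_coeffs(1)[OF neg]
    by (force simp: simple_coeff_uminus)
qed

lemma neg_root_iff_coeffs:
  assumes "\<gamma> \<in> \<Phi>"
  shows "- \<gamma> \<in> pos_roots \<Phi> \<Delta> \<longleftrightarrow> (\<forall>\<beta>\<in>\<Delta>. simple_coeff \<Delta> \<beta> \<gamma> \<le> 0)"
proof
  assume "- \<gamma> \<in> pos_roots \<Phi> \<Delta>"
  then show "\<forall>\<beta>\<in>\<Delta>. simple_coeff \<Delta> \<beta> \<gamma> \<le> 0"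
    using pos_root_coeffs(1) by (force simp: simple_coeff_uminus)
next
  assume nonpos: "\<forall>\<beta>\<in>\<Delta>. simple_coeff \<Delta> \<beta> \<gamma> \<le> 0"
  obtain \<beta> where "\<beta> \<in> \<Delta>" and "simple_coeff \<Delta> \<beta> \<gamma> \<noteq> 0"
    using assms by (rule root_has_nonzero_coeff)
  then show "- \<gamma> \<in> pos_roots \<Phi> \<Delta>"
    using pos_root_iff_coeff_pos[OF assms] nonpos root_pos_or_neg[OF assms] by force
qed

text \<open>A root outside \<open>span D\<close> has a nonzero coordinate along some \<open>\<beta> \<in> \<Delta> - D\<close>, which
  determines its sign and is not changed by \<open>W\<^sub>D\<close>.\<close>
lemma weyl_gen_pos_iff_outside_span:
  assumes "D \<subseteq> \<Delta>" and "u \<in> weyl_gen D" and "\<gamma> \<in> \<Phi>" and "\<gamma> \<notin> span D"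
  shows "u \<gamma> \<in> pos_roots \<Phi> \<Delta> \<longleftrightarrow> \<gamma> \<in> pos_roots \<Phi> \<Delta>"
proof -
  obtain \<beta> where \<beta>: "\<beta> \<in> \<Delta> - D" "simple_coeff \<Delta> \<beta> \<gamma> \<noteq> 0"
  proof (rule ccontr)
    assume "\<not> thesis"
    then have "\<forall>\<alpha>\<in>\<Delta>. simple_coeff \<Delta> \<alpha> \<gamma> *\<^sub>R \<alpha> \<in> span D"
      using that by (metis DiffI scale_zero_left span_base span_scale span_zero)
    then have "(\<Sum>\<alpha>\<in>\<Delta>. simple_coeff \<Delta> \<alpha> \<gamma> *\<^sub>R \<alpha>) \<in> span D"
      by (simp add: span_sum)
    then show False
      using assms(3,4) root_eq_sum_simple_coeff by metis
  qed
  have "simple_coeff \<Delta> \<beta> (u \<gamma>) = simple_coeff \<Delta> \<beta> \<gamma> + simple_coeff \<Delta> \<beta> (u \<gamma> - \<gamma>)"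
    using simple_coeff_linear by (simp add: linear_diff)
  also have "simple_coeff \<Delta> \<beta> (u \<gamma> - \<gamma>) = 0"
    using simple_coeff_span_eq_0 \<beta>(1) assms(1) weyl_gen_diff_in_span[OF assms(2)] by blast
  finally have "simple_coeff \<Delta> \<beta> (u \<gamma>) = simple_coeff \<Delta> \<beta> \<gamma>" by simp
  moreover have "u \<gamma> \<in> \<Phi>"
    using weyl_gen_root assms(1-3) simple_subset_roots by blast
  ultimately show ?thesis
    using pos_root_iff_coeff_pos[of "u \<gamma>" \<beta>] pos_root_iff_coeff_pos[OF assms(3), of \<beta>] \<beta>
    by simp
qed

lemma weyl_gen_levi_pos_neg:
  assumes "D \<subseteq> \<Delta>" and "u \<in> weyl_gen D" and simple_neg: "\<forall>d\<in>D. - u d \<in> pos_roots \<Phi> \<Delta>"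
    and "\<gamma> \<in> levi_pos \<Phi> \<Delta> D"
  shows "- u \<gamma> \<in> pos_roots \<Phi> \<Delta>"
proof -
  have \<gamma>: "\<gamma> \<in> pos_roots \<Phi> \<Delta>" "\<gamma> \<in> span D" "\<gamma> \<in> \<Phi>"
    using assms(4) by (auto simp: levi_pos_def levi_roots_def)
  have u_linear: "linear u"
    using assms(2) by (rule weyl_gen_linear)
  have "\<forall>\<beta>\<in>\<Delta>. simple_coeff \<Delta> \<beta> (u \<gamma>) \<le> 0"
  proof
    fix \<beta> assume "\<beta> \<in> \<Delta>"
    have "u \<gamma> = u (\<Sum>\<alpha>\<in>\<Delta>. simple_coeff \<Delta> \<alpha> \<gamma> *\<^sub>R \<alpha>)"
      using root_eq_sum_simple_coeff[OF \<gamma>(3)] by (rule arg_cong)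
    then have "simple_coeff \<Delta> \<beta> (u \<gamma>) =
        (\<Sum>\<alpha>\<in>\<Delta>. simple_coeff \<Delta> \<alpha> \<gamma> * simple_coeff \<Delta> \<beta> (u \<alpha>))"
      using u_linear simple_coeff_linear by (simp add: linear_sum linear_scale)
    also have "\<dots> \<le> 0"
    proof (rule sum_nonpos)
      fix \<alpha> assume \<alpha>: "\<alpha> \<in> \<Delta>"
      show "simple_coeff \<Delta> \<alpha> \<gamma> * simple_coeff \<Delta> \<beta> (u \<alpha>) \<le> 0"
      proof (cases "\<alpha> \<in> D")
        case True
        have "u \<alpha> \<in> \<Phi>"
          using weyl_gen_root assms(1,2) simple_subset_roots \<alpha> by blast
        then have "simple_coeff \<Delta> \<beta> (u \<alpha>) \<le> 0"
          using neg_root_iff_coeffs simple_neg True \<open>\<beta> \<in> \<Delta>\<close> by blast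
        moreover have "0 \<le> simple_coeff \<Delta> \<alpha> \<gamma>"
          using pos_root_coeffs(1)[OF \<gamma>(1)] \<alpha> by blast
        ultimately show ?thesis by (simp add: mult_nonneg_nonpos)
      next
        case False
        then show ?thesis
          using simple_coeff_span_eq_0 \<alpha> assms(1) \<gamma>(2) by simp
      qed
    qed
    finally show "simple_coeff \<Delta> \<beta> (u \<gamma>) \<le> 0" .
  qed
  moreover have "u \<gamma> \<in> \<Phi>"
    using weyl_gen_root assms(1,2) simple_subset_roots \<gamma>(3) by blast
  ultimately show ?thesis
    using neg_root_iff_coeffs by blast
qed

lemma weyl_gen_inv_levi_pos_neg:
  assumes "D \<subseteq> \<Delta>" and "u \<in> weyl_gen D" and "\<forall>d\<in>D. - u d \<in> pos_roots \<Phi> \<Delta>"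
    and "\<gamma> \<in> levi_pos \<Phi> \<Delta> D"
  shows "- inv u \<gamma> \<in> pos_roots \<Phi> \<Delta>"
proof (rule ccontr)
  assume "- inv u \<gamma> \<notin> pos_roots \<Phi> \<Delta>"
  have "0 \<notin> D"
    using assms(1) simple_subset_roots zero_notin_roots by blast
  then have "bij u" and "inv u \<in> weyl_gen D"
    using weyl_gen_bij_inv assms(2) by blast+
  have \<gamma>: "\<gamma> \<in> pos_roots \<Phi> \<Delta>" "\<gamma> \<in> span D" "\<gamma> \<in> \<Phi>"
    using assms(4) by (auto simp: levi_pos_def levi_roots_def)
  then have "inv u \<gamma> \<in> \<Phi>" and "inv u \<gamma> \<in> span D"
    using weyl_gen_root weyl_gen_span \<open>inv u \<in> weyl_gen D\<close> assms(1) simple_subset_roots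
    by blast+
  then have "inv u \<gamma> \<in> levi_pos \<Phi> \<Delta> D"
    using \<open>- inv u \<gamma> \<notin> pos_roots \<Phi> \<Delta>\<close> root_pos_or_neg
    by (auto simp: levi_pos_def levi_roots_def)
  then have "- \<gamma> \<in> pos_roots \<Phi> \<Delta>"
    using weyl_gen_levi_pos_neg[OF assms(1-3)] \<open>bij u\<close> by (metis bij_inv_eq_iff)
  then show False
    using pos_root_not_neg \<gamma>(1) by blast
qed

lemma right_min_neg_levi_root:
  assumes "x \<in> right_min \<Phi> \<Delta> D" and "\<rho> \<in> levi_roots \<Phi> D" and "- x \<rho> \<in> pos_roots \<Phi> \<Delta>"
  shows "- \<rho> \<in> pos_roots \<Phi> \<Delta>"
proof (rule ccontr)
  assume "- \<rho> \<notin> pos_roots \<Phi> \<Delta>"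
  then have "\<rho> \<in> levi_pos \<Phi> \<Delta> D"
    using assms(2) root_pos_or_neg by (auto simp: levi_pos_def levi_roots_def)
  moreover from this have "\<rho> \<in> inversions \<Phi> \<Delta> x"
    using assms(3) by (simp add: inversions_iff levi_pos_def)
  ultimately show False
    using assms(1) by (auto simp: right_min_def)
qed

text \<open>With \<open>\<delta> = x\<^sup>-\<^sup>1 \<gamma>\<close>, a negative
  \<open>\<delta> \<in> span D\<close> is excluded by \<open>x \<in> W\<^sup>D\<close>, a positive one is made negative by \<open>w\<^sup>-\<^sup>1\<close>,
  and outside \<open>span D\<close> both \<open>z\<^sup>-\<^sup>1\<close> and \<open>w\<^sup>-\<^sup>1\<close> keep the sign of \<open>\<delta>\<close>.\<close>
lemma inversions_inv_comp_subset:
  assumes "D \<subseteq> \<Delta>" and x: "x \<in> right_min \<Phi> \<Delta> D"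
    and w: "w \<in> weyl_gen D" "\<forall>d\<in>D. - w d \<in> pos_roots \<Phi> \<Delta>" and z: "z \<in> weyl_gen D"
  shows "inversions \<Phi> \<Delta> (inv (x \<circ> z)) \<subseteq> inversions \<Phi> \<Delta> (inv (x \<circ> w))"
proof
  fix \<gamma> assume "\<gamma> \<in> inversions \<Phi> \<Delta> (inv (x \<circ> z))"
  have D0: "0 \<notin> D" "D \<subseteq> \<Phi>"
    using assms(1) simple_subset_roots zero_notin_roots by blast+
  have x_weyl: "x \<in> weyl \<Phi>"
    using x by (simp add: right_min_def)
  then have "bij x" and "inv x \<in> weyl \<Phi>"
    using weyl_gen_bij_inv zero_notin_roots by blast+
  have "bij z" "inv z \<in> weyl_gen D" "bij w" "inv w \<in> weyl_gen D"
    using weyl_gen_bij_inv D0(1) w(1) z by blast+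
  define \<delta> where "\<delta> = inv x \<gamma>"
  have \<gamma>: "\<gamma> \<in> pos_roots \<Phi> \<Delta>" "- inv z \<delta> \<in> pos_roots \<Phi> \<Delta>"
    using \<open>\<gamma> \<in> inversions \<Phi> \<Delta> (inv (x \<circ> z))\<close> \<open>bij x\<close> \<open>bij z\<close>
    by (auto simp: inversions_iff o_inv_distrib \<delta>_def)
  have \<delta>: "\<delta> \<in> \<Phi>"
    using weyl_gen_root[OF _ \<open>inv x \<in> weyl \<Phi>\<close>] \<gamma>(1) pos_roots_subset \<delta>_def by blast
  have "- inv w \<delta> \<in> pos_roots \<Phi> \<Delta>"
  proof (cases "\<delta> \<in> span D")
    case True
    have "x (- \<delta>) = - \<gamma>"
      using weyl_gen_linear[OF x_weyl] \<open>bij x\<close> by (simp add: linear_neg \<delta>_def bij_is_surj surj_f_inv_f)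
    then have "\<delta> \<in> pos_roots \<Phi> \<Delta>"
      using right_min_neg_levi_root[OF x, of "- \<delta>"] True \<delta> \<gamma>(1)
      by (simp add: levi_roots_def uminus_root span_neg)
    then show ?thesis
      using weyl_gen_inv_levi_pos_neg[OF assms(1) w] True \<delta> by (simp add: levi_pos_def levi_roots_def)
  next
    case False
    have "inv z \<delta> \<notin> pos_roots \<Phi> \<Delta>"
      using pos_root_not_neg \<gamma>(2) by force
    then have "inv w \<delta> \<notin> pos_roots \<Phi> \<Delta>"
      using weyl_gen_pos_iff_outside_span[OF assms(1) _ \<delta> False] \<open>inv z \<in> weyl_gen D\<close>
        \<open>inv w \<in> weyl_gen D\<close> by blast
    moreover have "inv w \<delta> \<in> \<Phi>"
      using weyl_gen_root[OF D0(2) \<open>inv w \<in> weyl_gen D\<close> \<delta>] .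
    ultimately show ?thesis
      using root_pos_or_neg by blast
  qed
  then show "\<gamma> \<in> inversions \<Phi> \<Delta> (inv (x \<circ> w))"
    using \<gamma>(1) \<open>bij x\<close> \<open>bij w\<close> by (simp add: inversions_iff o_inv_distrib \<delta>_def)
qed

lemma left_min_comp_levi:
  assumes v: "v \<in> left_min \<Phi> \<Delta> M"
    and "w \<in> weyl_gen (Rset \<Phi> \<Delta> v)"
    and "x \<in> right_min \<Phi> \<Delta> (Rset \<Phi> \<Delta> v)"
    and "v = x \<circ> w" and "z \<in> weyl_gen (Rset \<Phi> \<Delta> v)"
  shows "x \<circ> z \<in> left_min \<Phi> \<Delta> M"
proof -
  define D where "D = Rset \<Phi> \<Delta> v"
  have D: "D \<subseteq> \<Delta>" "D \<subseteq> \<Phi>"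
    using simple_subset_roots by (auto simp: D_def Rset_def)
  have w: "w \<in> weyl_gen D" and x: "x \<in> right_min \<Phi> \<Delta> D" and z: "z \<in> weyl_gen D"
    using assms(2,3,5) by (simp_all add: D_def)
  have w_neg: "- w d \<in> pos_roots \<Phi> \<Delta>" if "d \<in> D" for d
  proof (rule right_min_neg_levi_root[OF x])
    have "w d \<in> \<Phi>"
      using weyl_gen_root[OF D(2) w] that D(2) by blast
    moreover have "w d \<in> span D"
      using weyl_gen_span[OF w span_base[OF that]] .
    ultimately show "w d \<in> levi_roots \<Phi> D"
      by (simp add: levi_roots_def)
    have "d \<in> inversions \<Phi> \<Delta> v"
      using that by (simp add: D_def Rset_def)
    then show "- x (w d) \<in> pos_roots \<Phi> \<Delta>"
      using \<open>v = x \<circ> w\<close> by (simp add: inversions_iff)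
  qed
  have "x \<circ> z \<in> weyl \<Phi>"
    using x weyl_gen_mono[OF D(2)] z by (auto simp: right_min_def intro: weyl_gen_comp)
  moreover have "inversions \<Phi> \<Delta> (inv (x \<circ> z)) \<subseteq> inversions \<Phi> \<Delta> (inv (x \<circ> w))"
    using inversions_inv_comp_subset[OF D(1) x w] w_neg z by blast
  moreover have "inversions \<Phi> \<Delta> (inv (x \<circ> w)) \<subseteq> pos_roots \<Phi> \<Delta> - levi_pos \<Phi> \<Delta> M"
    using v \<open>v = x \<circ> w\<close> by (simp add: left_min_def)
  ultimately show ?thesis
    unfolding left_min_def by blast
qed

end

theorem mainTheorem2:
  fixes \<Phi> \<Delta> :: "'a::euclidean_space set"
    and S :: "'a \<Rightarrow> complex"
    and v x w :: "'a \<Rightarrow> 'a"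
  assumes "root_system \<Phi>"
    and "simple_system \<Phi> \<Delta>"
    and "linear S"
    and "\<exists>\<gamma>\<in>\<Phi>. S \<gamma> = 0"
    and "{\<gamma>\<in>\<Phi>. S \<gamma> = 0} = levi_roots \<Phi> {\<alpha>\<in>\<Delta>. S \<alpha> = 0}"
    and "v \<in> left_min \<Phi> \<Delta> {\<alpha>\<in>\<Delta>. S \<alpha> = 0}"
    and "longest \<Delta> (Rset \<Phi> \<Delta> v) w"
    and "x \<in> right_min \<Phi> \<Delta> (Rset \<Phi> \<Delta> v)"
    and "v = x \<circ> w"
  shows "\<forall>z\<in>weyl_gen (Rset \<Phi> \<Delta> v). x \<circ> z \<in> left_min \<Phi> \<Delta> {\<alpha>\<in>\<Delta>. S \<alpha> = 0}"
proof
  fix z assume "z \<in> weyl_gen (Rset \<Phi> \<Delta> v)"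
  interpret simple_root_system \<Phi> \<Delta>
    using assms(1,2) by unfold_locales
  have "w \<in> weyl_gen (Rset \<Phi> \<Delta> v)"
    using assms(7) by (simp add: longest_def)
  then show "x \<circ> z \<in> left_min \<Phi> \<Delta> {\<alpha>\<in>\<Delta>. S \<alpha> = 0}"
    using left_min_comp_levi assms(6,8,9) \<open>z \<in> weyl_gen (Rset \<Phi> \<Delta> v)\<close> by blast
qed

end
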